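(* Let $B$ be a Ferrers board with $n$ columns, and let $M$ be the maximum entry of its root vector $\xi(B)$. If the first occurrence of $M$ in $\xi(B)$ is in position $j$, then $B$ is connected by a sequence of edges in the rook equivalence graph $G(B)$ to a Ferrers board $B'$ whose root vector $\xi(B')$ agrees with $\xi(B)$ in the first $j$ positions and is weakly decreasing in the positions $i\ge j$.
   Context: A Ferrers board is given by a weakly increasing sequence of non-negative integers $B=(b_1,\ldots,b_n)$ of column heights; it is the set of unit cells in the first quadrant lying in column $i$ and rows $1,\ldots,b_i$. Prepending columns of height $0$ on the left does not change the board, and boards are compared using the same number of columns by such padding. A placement of $k$ rooks on $B$ is a set of $k$ cells of $B$ no two in the same row or column; $r_k(B)$ is the number of such placements. Two boards are rook equivalent if they have equal $r_k$ for all $k\ge 0$. The root vector of $B$ is $\xi(B)=\langle 0-b_1,1-b_2,\ldots,(n-1)-b_n\rangle$. The rook equivalence graph $G(B)$ has as vertices all Ferrers boards rook equivalent to $B$, and $\{B_1,B_2\}$ is an edge iff, written with the same number of columns, $B_1$ and $B_2$ differ in exactly two columns $i$ and $j$, where $B_1$ has $k$ more cells than $B_2$ in column $i$ and $k$ fewer cells than $B_2$ in column $j$, for some $k>0$. *)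

theory Defs
  imports Main
begin

text \<open>A Ferrers board is a list of column heights (b_1,...,b_n), weakly increasing.
  Column i (0-based list index) contains the cells in rows 1..b_i.\<close>

definition ferrers :: "nat list \<Rightarrow> bool" where
  "ferrers B \<longleftrightarrow> sorted B"

definition cells :: "nat list \<Rightarrow> (nat \<times> nat) set" where
  "cells B = {(i, r). i < length B \<and> 1 \<le> r \<and> r \<le> B ! i}"

definition rook_placements :: "nat list \<Rightarrow> nat \<Rightarrow> (nat \<times> nat) set set" where
  "rook_placements B k = {P. P \<subseteq> cells B \<and> card P = k \<and>
      (\<forall>c\<in>P. \<forall>d\<in>P. c \<noteq> d \<longrightarrow> fst c \<noteq> fst d \<and> snd c \<noteq> snd d)}"

definition rook_num :: "nat list \<Rightarrow> nat \<Rightarrow> nat" where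
  "rook_num B k = card (rook_placements B k)"

definition rook_equiv :: "nat list \<Rightarrow> nat list \<Rightarrow> bool" where
  "rook_equiv B C \<longleftrightarrow> (\<forall>k. rook_num B k = rook_num C k)"

text \<open>Root vector xi(B) = <0 - b_1, 1 - b_2, ..., (n-1) - b_n> (0-based index i gives i - b_{i+1}).\<close>
definition root_vector :: "nat list \<Rightarrow> int list" where
  "root_vector B = map (\<lambda>i. int i - int (B ! i)) [0..<length B]"

definition pad :: "nat \<Rightarrow> nat list \<Rightarrow> nat list" where
  "pad m B = replicate (m - length B) 0 @ B"

definition rook_edge :: "nat list \<Rightarrow> nat list \<Rightarrow> bool" where
  "rook_edge B1 B2 \<longleftrightarrow>
     (let m = max (length B1) (length B2); X = pad m B1; Y = pad m B2 in
      \<exists>i j k. i < m \<and> j < m \<and> i \<noteq> j \<and> k > 0 \<and>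
        X ! i = Y ! i + k \<and> Y ! j = X ! j + k \<and>
        (\<forall>l<m. l \<noteq> i \<longrightarrow> l \<noteq> j \<longrightarrow> X ! l = Y ! l))"

definition G_vertex :: "nat list \<Rightarrow> nat list \<Rightarrow> bool" where
  "G_vertex B C \<longleftrightarrow> ferrers C \<and> rook_equiv C B"

definition G_edge :: "nat list \<Rightarrow> nat list \<Rightarrow> nat list \<Rightarrow> bool" where
  "G_edge B C D \<longleftrightarrow> G_vertex B C \<and> G_vertex B D \<and> rook_edge C D"

end

theory Submission
  imports Defs "HOL-Library.Multiset"
begin

(*
  A list of naturals is a weakly increasing board iff its root vector x satisfies
  x_(i+1) <= x_i + 1, and by the Goldman-Joichi-White factorisation boards with the same
  number of columns whose root vectors are permutations of each other are rook equivalent.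
  Swapping two roots x_p < x_q with p < q moves x_q - x_p cells from column p to column q,
  which is an edge of G(B) whenever the result is again a board.
  The roots after position j are then sorted by a selection sort filling the positions from
  the right: while some x_p with j < p < q is smaller than the root x_q at the last open
  position q, swap x_q with the first such x_p. Maximality of x_j and the choice of p keep
  every swap legal, and x_q strictly decreases.
*)

definition nonattacking :: "(nat \<times> nat) set \<Rightarrow> bool" where
  "nonattacking P \<longleftrightarrow> (\<forall>c\<in>P. \<forall>d\<in>P. c \<noteq> d \<longrightarrow> fst c \<noteq> fst d \<and> snd c \<noteq> snd d)"

lemma rook_placements_iff:
  "P \<in> rook_placements B k \<longleftrightarrow> P \<subseteq> cells B \<and> card P = k \<and> nonattacking P"
  by (simp add: rook_placements_def nonattacking_def)

lemma nonattacking_insert: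
  "nonattacking (insert c P) \<longleftrightarrow>
     nonattacking P \<and> (\<forall>d\<in>P. d \<noteq> c \<longrightarrow> fst d \<noteq> fst c \<and> snd d \<noteq> snd c)"
  unfolding nonattacking_def by auto

lemma nonattacking_subset: "nonattacking P \<Longrightarrow> Q \<subseteq> P \<Longrightarrow> nonattacking Q"
  unfolding nonattacking_def by blast

lemma inj_on_fst_if_nonattacking: "nonattacking P \<Longrightarrow> inj_on fst P"
  unfolding nonattacking_def by (meson inj_onI)

lemma inj_on_snd_if_nonattacking: "nonattacking P \<Longrightarrow> inj_on snd P"
  unfolding nonattacking_def by (meson inj_onI)

lemma finite_cells: "finite (cells B)"
proof -
  have "cells B \<subseteq> {..<length B} \<times> {..sum_list B}"
    unfolding cells_def using elem_le_sum_list by fastforce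
  then show ?thesis by (rule finite_subset) auto
qed

lemma finite_if_subset_cells: "P \<subseteq> cells B \<Longrightarrow> finite P"
  using finite_cells by (rule rev_finite_subset)

lemma finite_rook_placements: "finite (rook_placements B k)"
  by (rule finite_subset[of _ "Pow (cells B)"]) (auto simp: rook_placements_iff finite_cells)

lemma fst_less_length_if_cell: "c \<in> cells B \<Longrightarrow> fst c < length B"
  by (auto simp: cells_def)

lemma last_column_notin_cells: "(length B, r) \<notin> cells B"
  using fst_less_length_if_cell by fastforce

lemma cells_snoc: "cells (B @ [a]) = cells B \<union> {length B} \<times> {1..a}"
  unfolding cells_def by (auto simp: nth_append less_Suc_eq)

lemma rook_num_0: "rook_num B 0 = 1"
proof -
  have "P \<subseteq> cells B \<Longrightarrow> card P = 0 \<longleftrightarrow> P = {}" for P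
    using finite_if_subset_cells by auto
  then have "rook_placements B 0 = {{}}"
    by (auto simp: rook_placements_iff nonattacking_def)
  then show ?thesis by (simp add: rook_num_def)
qed

lemma rook_num_eq_0_if_length_less:
  assumes "length B < k" shows "rook_num B k = 0"
proof -
  have "card P \<le> length B" if "P \<in> rook_placements B k" for P
  proof -
    have "fst ` P \<subseteq> {..<length B}" "inj_on fst P"
      using that by (auto simp: rook_placements_iff cells_def inj_on_fst_if_nonattacking)
    then show ?thesis by (metis card_image card_lessThan card_mono finite_lessThan)
  qed
  then have "rook_placements B k = {}"
    using assms by (fastforce simp: rook_placements_iff)
  then show ?thesis by (simp add: rook_num_def)
qed

lemma rows_of_rook_placement:
  assumes "Q \<in> rook_placements B k" "\<forall>x\<in>set B. x \<le> a"
  shows "snd ` Q \<subseteq> {1..a}" "card (snd ` Q) = k"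
  using assms by (auto simp: rook_placements_iff cells_def card_image inj_on_snd_if_nonattacking
      dest!: subsetD) (meson le_trans nth_mem)

lemma rook_placements_snoc_avoiding_last:
  "{P \<in> rook_placements (B @ [a]) k. length B \<notin> fst ` P} = rook_placements B k"
proof -
  have "P \<subseteq> cells (B @ [a]) \<and> length B \<notin> fst ` P \<longleftrightarrow> P \<subseteq> cells B" for P
    unfolding cells_snoc by (force dest: fst_less_length_if_cell)
  then have "P \<in> rook_placements (B @ [a]) k \<and> length B \<notin> fst ` P \<longleftrightarrow> P \<in> rook_placements B k"
    for P
    unfolding rook_placements_iff by blast
  then show ?thesis by blast
qed

lemma insert_last_column_rook_placement:
  assumes "Q \<in> rook_placements B k" "r \<in> {1..a}" "r \<notin> snd ` Q"
  shows "insert (length B, r) Q \<in> rook_placements (B @ [a]) (Suc k)"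
proof -
  have cells: "Q \<subseteq> cells B" and card: "card Q = k" and na: "nonattacking Q"
    using assms(1) by (auto simp: rook_placements_iff)
  have "(length B, r) \<notin> Q" using cells last_column_notin_cells by blast
  then have "card (insert (length B, r) Q) = Suc k"
    using card finite_if_subset_cells[OF cells] by simp
  moreover have "fst d \<noteq> length B \<and> snd d \<noteq> r" if "d \<in> Q" for d
    using fst_less_length_if_cell[OF subsetD[OF cells that]] imageI[OF that, of snd] assms(3)
    by auto
  then have "nonattacking (insert (length B, r) Q)" using na by (simp add: nonattacking_insert)
  moreover have "insert (length B, r) Q \<subseteq> cells (B @ [a])"
    unfolding cells_snoc using cells assms(2) by blast
  ultimately show ?thesis by (simp add: rook_placements_iff)
qed

lemma remove_last_column_rook_placement:
  assumes "P \<in> rook_placements (B @ [a]) (Suc k)" "(length B, r) \<in> P"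
  defines "Q \<equiv> P - {(length B, r)}"
  shows "Q \<in> rook_placements B k" "r \<in> {1..a}" "r \<notin> snd ` Q"
proof -
  have cells: "P \<subseteq> cells (B @ [a])" and card: "card P = Suc k" and na: "nonattacking P"
    using assms(1) by (auto simp: rook_placements_iff)
  have other: "fst d \<noteq> length B \<and> snd d \<noteq> r" if "d \<in> Q" for d
    using na assms(2) that unfolding Q_def nonattacking_def by fastforce
  have "Q \<subseteq> cells B"
  proof
    fix d assume "d \<in> Q"
    then have "d \<in> cells B \<union> {length B} \<times> {1..a}" using cells cells_snoc unfolding Q_def by blast
    then show "d \<in> cells B" using other[OF \<open>d \<in> Q\<close>] by auto
  qed
  moreover have "card Q = k"
    using card assms(2) finite_if_subset_cells[OF cells] unfolding Q_def by simp
  moreover have "nonattacking Q" using na unfolding Q_def by (rule nonattacking_subset) blast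
  ultimately show "Q \<in> rook_placements B k" by (simp add: rook_placements_iff)
  show "r \<in> {1..a}" using cells assms(2) by (auto simp: cells_snoc cells_def)
  show "r \<notin> snd ` Q" using other by force
qed

lemma bij_betw_rook_placements_snoc_meeting_last:
  "bij_betw (\<lambda>(Q, r). insert (length B, r) Q)
     (SIGMA Q:rook_placements B k. {1..a} - snd ` Q)
     {P \<in> rook_placements (B @ [a]) (Suc k). length B \<in> fst ` P}"
  (is "bij_betw ?f ?S ?A")
proof (rule bij_betw_imageI)
  show "inj_on ?f ?S"
  proof (rule inj_onI)
    fix x y assume "x \<in> ?S" "y \<in> ?S" and eq: "?f x = ?f y"
    moreover obtain Q r Q' r' where xy: "x = (Q, r)" "y = (Q', r')" by (cases x, cases y)
    ultimately have "Q \<subseteq> cells B" "Q' \<subseteq> cells B" by (auto simp: rook_placements_iff)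
    then have notin: "(length B, r) \<notin> Q" "(length B, r') \<notin> Q'" "(length B, r) \<notin> Q'"
      using last_column_notin_cells by blast+
    have ins: "insert (length B, r) Q = insert (length B, r') Q'" using eq xy by simp
    then have "r = r'" using notin(3) by blast
    with ins notin(1,2) have "Q = Q'" by (simp add: insert_ident)
    with \<open>r = r'\<close> show "x = y" using xy by simp
  qed
  show "?f ` ?S = ?A"
  proof (intro subset_antisym subsetI)
    fix P assume "P \<in> ?f ` ?S"
    then show "P \<in> ?A" by (auto intro: insert_last_column_rook_placement)
  next
    fix P assume "P \<in> ?A"
    then obtain r where P: "P \<in> rook_placements (B @ [a]) (Suc k)" and r: "(length B, r) \<in> P"
      by force
    then have "P = ?f (P - {(length B, r)}, r)" by auto
    then show "P \<in> ?f ` ?S" using remove_last_column_rook_placement[OF P r] by blast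
  qed
qed

text \<open>A new rook in a column at least as high as all others can use any of its rows
  not already used by the other k rooks.\<close>
lemma rook_num_snoc:
  assumes "\<forall>x\<in>set B. x \<le> a"
  shows "int (rook_num (B @ [a]) (Suc k)) =
           int (rook_num B (Suc k)) + (int a - int k) * int (rook_num B k)"
proof -
  let ?A = "rook_placements (B @ [a]) (Suc k)"
  let ?S = "SIGMA Q:rook_placements B k. {1..a} - snd ` Q"
  have "?A = {P \<in> ?A. length B \<notin> fst ` P} \<union> {P \<in> ?A. length B \<in> fst ` P}" by blast
  then have "card ?A = card {P \<in> ?A. length B \<notin> fst ` P} + card {P \<in> ?A. length B \<in> fst ` P}"
    by (metis (no_types, lifting) card_Un_disjoint disjoint_iff finite_Un finite_rook_placements
        mem_Collect_eq)
  also have "\<dots> = rook_num B (Suc k) + card ?S"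
    using bij_betw_same_card[OF bij_betw_rook_placements_snoc_meeting_last]
    by (simp add: rook_num_def rook_placements_snoc_avoiding_last)
  finally have "card ?A = rook_num B (Suc k) + card ?S" .
  moreover have "int (card ?S) = (\<Sum>Q\<in>rook_placements B k. int a - int k)"
  proof -
    have "int (card ({1..a} - snd ` Q)) = int a - int k" if "Q \<in> rook_placements B k" for Q
    proof -
      have "snd ` Q \<subseteq> {1..a}" "card (snd ` Q) = k"
        using rows_of_rook_placement[OF that assms] by auto
      moreover from this have "k \<le> a" using card_mono[of "{1..a}" "snd ` Q"] by simp
      ultimately show ?thesis by (simp add: card_Diff_subset finite_subset of_nat_diff)
    qed
    then show ?thesis by (simp add: card_SigmaI finite_rook_placements)
  qed
  ultimately show ?thesis by (simp add: rook_num_def)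
qed

text \<open>If T j is the coefficient of the falling factorial (x)_j in a polynomial, then
  falling_step a T is the coefficient sequence of x - a times that polynomial, because
  (x - a) (x)_j = (x)_(j+1) + (j - a) (x)_j.\<close>
definition falling_step :: "int \<Rightarrow> (int \<Rightarrow> int) \<Rightarrow> int \<Rightarrow> int" where
  "falling_step a T = (\<lambda>j. T (j - 1) + (j - a) * T j)"

definition falling_coeffs :: "int list \<Rightarrow> int \<Rightarrow> int" where
  "falling_coeffs xs = fold falling_step xs (\<lambda>j. if j = 0 then 1 else 0)"

lemma falling_step_commute: "falling_step a \<circ> falling_step b = falling_step b \<circ> falling_step a"
  by (intro ext) (simp add: falling_step_def algebra_simps)

lemma falling_coeffs_mset_eq: "mset xs = mset ys \<Longrightarrow> falling_coeffs xs = falling_coeffs ys"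
  unfolding falling_coeffs_def by (metis fold_multiset_equiv falling_step_commute)

lemma falling_coeffs_snoc:
  "falling_coeffs (xs @ [a]) j = falling_coeffs xs (j - 1) + (j - a) * falling_coeffs xs j"
  by (simp add: falling_coeffs_def falling_step_def)

lemma falling_coeffs_eq_0_if_length_less:
  "int (length xs) < j \<Longrightarrow> falling_coeffs xs j = 0"
  by (induction xs arbitrary: j rule: rev_induct)
    (auto simp: falling_coeffs_snoc, simp add: falling_coeffs_def)

lemma length_root_vector [simp]: "length (root_vector B) = length B"
  by (simp add: root_vector_def)

lemma root_vector_nth: "i < length B \<Longrightarrow> root_vector B ! i = int i - int (B ! i)"
  by (simp add: root_vector_def)

lemma root_vector_nth_le: "i < length B \<Longrightarrow> root_vector B ! i \<le> int i"
  by (simp add: root_vector_nth)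

lemma root_vector_snoc: "root_vector (B @ [a]) = root_vector B @ [int (length B) - int a]"
  by (rule nth_equalityI) (auto simp: root_vector_def nth_append less_Suc_eq)

lemma falling_coeffs_root_vector:
  "sorted B \<Longrightarrow> falling_coeffs (root_vector B) (int (length B) - int k) = int (rook_num B k)"
proof (induction B arbitrary: k rule: rev_induct)
  case Nil
  then show ?case
    by (cases k) (simp_all add: falling_coeffs_def root_vector_def rook_num_0
        rook_num_eq_0_if_length_less)
next
  case (snoc a B)
  let ?T = "falling_coeffs (root_vector B)"
  have IH: "?T (int (length B) - int k) = int (rook_num B k)" for k
    using snoc by (simp add: sorted_append)
  have le: "\<forall>x\<in>set B. x \<le> a" using snoc.prems by (simp add: sorted_append)
  show ?case
  proof (cases k)
    case 0
    then show ?thesis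
      using IH[of 0] by (simp add: root_vector_snoc falling_coeffs_snoc
          falling_coeffs_eq_0_if_length_less rook_num_0)
  next
    case (Suc k')
    have "falling_coeffs (root_vector (B @ [a])) (int (length (B @ [a])) - int k) =
          ?T (int (length B) - int k) + (int a - int k') * ?T (int (length B) - int k')"
      by (simp add: root_vector_snoc falling_coeffs_snoc Suc algebra_simps)
    also have "\<dots> = int (rook_num (B @ [a]) k)"
      using rook_num_snoc[OF le, of k'] IH[of k] IH[of k'] by (simp add: Suc)
    finally show ?thesis .
  qed
qed

lemma rook_equiv_if_mset_root_vector:
  assumes "sorted C" "sorted D" "length C = length D"
    and "mset (root_vector C) = mset (root_vector D)"
  shows "rook_equiv C D"
  unfolding rook_equiv_def
proof
  fix k
  show "rook_num C k = rook_num D k"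
    using falling_coeffs_root_vector[OF assms(1), of k] falling_coeffs_root_vector[OF assms(2), of k]
      falling_coeffs_mset_eq[OF assms(4)] assms(3) by simp
qed

lemma sorted_iff_root_vector:
  "sorted B \<longleftrightarrow> (\<forall>i. Suc i < length B \<longrightarrow> root_vector B ! Suc i \<le> root_vector B ! i + 1)"
  by (auto simp: sorted_iff_nth_Suc root_vector_nth)

lemma rook_edge_move_cells:
  assumes "p < length B" "q < length B" "p \<noteq> q" "0 < d" "d \<le> B ! p"
  shows "rook_edge B (B[p := B ! p - d, q := B ! q + d])"
  unfolding rook_edge_def Let_def pad_def
  using assms by (intro exI[of _ p] exI[of _ q] exI[of _ d]) auto

text \<open>The hypotheses keep the board weakly increasing around the positions p and q + 1.\<close>
lemma exists_board_swapping_roots: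
  fixes B :: "nat list"
  defines "x \<equiv> root_vector B"
  assumes "sorted B" "0 < p" "p < q" "q < length B"
    and "x ! p < x ! q" "x ! q \<le> x ! (p - 1)"
    and "Suc q < length B \<Longrightarrow> x ! Suc q \<le> x ! p + 1"
  shows "\<exists>B'. sorted B' \<and> rook_edge B B' \<and> root_vector B' = x[p := x ! q, q := x ! p]"
proof -
  define d where "d = nat (x ! q - x ! p)"
  define B' where "B' = B[p := B ! p - d, q := B ! q + d]"
  have d: "int d = x ! q - x ! p" "0 < d" using assms(6) by (simp_all add: d_def)
  have "p - 1 < length B" using assms(4,5) by simp
  then have "x ! q \<le> int p - 1"
    using assms(3,7) root_vector_nth_le[of "p - 1" B] unfolding x_def by simp
  then have "d \<le> B ! p" using d(1) root_vector_nth[of p B] assms(3-5) unfolding x_def by simp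
  then have rv: "root_vector B' = x[p := x ! q, q := x ! p]"
    using assms(3-5) d(1)
    by (intro nth_equalityI) (auto simp: B'_def x_def root_vector_nth nth_list_update)
  have step: "x ! Suc i \<le> x ! i + 1" if "Suc i < length B" for i
    using assms(2) that unfolding sorted_iff_root_vector x_def by blast
  have "sorted B'"
    unfolding sorted_iff_root_vector rv
  proof (intro allI impI)
    fix i assume i: "Suc i < length B'"
    have "length x = length B" "length B' = length B" by (simp_all add: x_def B'_def)
    then show "x[p := x ! q, q := x ! p] ! Suc i \<le> x[p := x ! q, q := x ! p] ! i + 1"
      using i assms(3-8) step[of i] step[of p] step[of "q - 1"]
      by (auto simp: nth_list_update)
  qed
  moreover have "rook_edge B B'"
    unfolding B'_def using assms(3-5) d(2) \<open>d \<le> B ! p\<close> by (intro rook_edge_move_cells) auto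
  ultimately show ?thesis using rv by blast
qed

lemma G_edge_swapping_roots:
  fixes C :: "nat list"
  defines "x \<equiv> root_vector C"
  assumes "G_vertex B C" "0 < p" "p < q" "q < length C"
    and "x ! p < x ! q" "x ! q \<le> x ! (p - 1)"
    and "Suc q < length C \<Longrightarrow> x ! Suc q \<le> x ! p + 1"
  shows "\<exists>C'. G_edge B C C' \<and> root_vector C' = x[p := x ! q, q := x ! p]"
proof -
  have "sorted C" using assms(2) by (simp add: G_vertex_def ferrers_def)
  then obtain C' where C': "sorted C'" "rook_edge C C'" "root_vector C' = x[p := x ! q, q := x ! p]"
    using exists_board_swapping_roots assms(3-8) unfolding x_def by blast
  have "length C' = length C" using arg_cong[OF C'(3), of length] by (simp add: x_def)
  moreover have "mset (root_vector C') = mset (root_vector C)"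
    using C'(3) assms(4,5) by (simp add: x_def mset_swap)
  ultimately have "rook_equiv C' C"
    using rook_equiv_if_mset_root_vector[OF C'(1) \<open>sorted C\<close>] by blast
  then have "G_vertex B C'"
    using C'(1) assms(2) by (simp add: G_vertex_def ferrers_def rook_equiv_def)
  then show ?thesis using C' assms(2) by (auto simp: G_edge_def)
qed

text \<open>Invariant of the selection sort: entry j dominates every later entry, and the entries
  from position m on are final, i.e.\ weakly decreasing and dominated by all entries from j on.\<close>
definition settled :: "nat \<Rightarrow> nat \<Rightarrow> int list \<Rightarrow> bool" where
  "settled j m xs \<longleftrightarrow>
     (\<forall>i k. j \<le> i \<longrightarrow> i \<le> k \<longrightarrow> k < length xs \<longrightarrow> (i = j \<or> m \<le> k) \<longrightarrow> xs ! k \<le> xs ! i)"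

lemma settledD:
  "settled j m xs \<Longrightarrow> j \<le> i \<Longrightarrow> i \<le> k \<Longrightarrow> k < length xs \<Longrightarrow> i = j \<or> m \<le> k \<Longrightarrow>
    xs ! k \<le> xs ! i"
  unfolding settled_def by blast

lemma settled_swap:
  assumes "settled j m xs" "j < p" "p < q" "q < m" "m \<le> length xs"
  shows "settled j m (xs[p := xs ! q, q := xs ! p])"
proof -
  define \<sigma> where "\<sigma> t = (if t = p then q else if t = q then p else t)" for t
  have swap: "xs[p := xs ! q, q := xs ! p] ! t = xs ! \<sigma> t" if "t < length xs" for t
    using that assms(3-5) by (auto simp: \<sigma>_def nth_list_update)
  have \<sigma>: "j \<le> \<sigma> t" "\<sigma> t < length xs" if "j \<le> t" "t < length xs" for t
    using that assms(2-5) by (auto simp: \<sigma>_def)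
  show ?thesis
    unfolding settled_def length_list_update
  proof (intro allI impI)
    fix i k assume ik: "j \<le> i" "i \<le> k" "k < length xs" "i = j \<or> m \<le> k"
    then consider "i = j" | "m \<le> k" by blast
    then show "xs[p := xs ! q, q := xs ! p] ! k \<le> xs[p := xs ! q, q := xs ! p] ! i"
    proof cases
      case 1
      then show ?thesis
        using settledD[OF assms(1) order_refl \<sigma>(1)[of k]] \<sigma>[of k] ik assms(2,3)
        by (simp add: swap \<sigma>_def)
    next
      case 2
      then have "\<sigma> k = k" "\<sigma> i \<le> k" using ik assms(3,4) by (auto simp: \<sigma>_def)
      then show ?thesis
        using settledD[OF assms(1) \<sigma>(1)[of i] _ ik(3)] \<sigma>[of i] ik 2 by (simp add: swap)
    qed
  qed
qed

lemma settled_if_no_smaller: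
  assumes "settled j (Suc q) xs" "\<forall>p. j < p \<and> p < q \<longrightarrow> xs ! q \<le> xs ! p"
  shows "settled j q xs"
  unfolding settled_def
proof (intro allI impI)
  fix i k assume ik: "j \<le> i" "i \<le> k" "k < length xs" "i = j \<or> q \<le> k"
  show "xs ! k \<le> xs ! i"
  proof (cases "i = j \<or> Suc q \<le> k")
    case True
    then show ?thesis using settledD[OF assms(1)] ik by simp
  next
    case False
    then have "k = q" "j < i" using ik by auto
    then show ?thesis using assms(2) ik(2) by (cases "i = q") simp_all
  qed
qed

lemma G_edge_swapping_first_smaller:
  fixes C :: "nat list"
  defines "x \<equiv> root_vector C"
  assumes "G_vertex B C" "settled j (Suc q) x" "q < length C"
    and "j < p" "p < q" "x ! p < x ! q" "\<forall>p'. j < p' \<and> p' < p \<longrightarrow> x ! q \<le> x ! p'"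
  shows "\<exists>C'. G_edge B C C' \<and> root_vector C' = x[p := x ! q, q := x ! p]"
proof (rule G_edge_swapping_roots[OF assms(2), folded x_def])
  note settled = settledD[OF assms(3), unfolded x_def length_root_vector]
  show "x ! q \<le> x ! (p - 1)"
  proof (cases "p - 1 = j")
    case True
    then show ?thesis using settled[of j q] assms(4-6) unfolding x_def by simp
  next
    case False
    then show ?thesis using assms(5,6,8) by simp
  qed
  show "x ! Suc q \<le> x ! p + 1" if "Suc q < length C"
    using settled[of p "Suc q"] assms(5,6) that unfolding x_def by simp
qed (use assms in auto)

lemma exists_G_path_settling_position:
  assumes "G_vertex B C" "j < q" "q < length C" "settled j (Suc q) (root_vector C)"
  shows "\<exists>C'. (G_edge B)\<^sup>*\<^sup>* C C' \<and> G_vertex B C' \<and> length C' = length C \<and>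
    settled j q (root_vector C') \<and> (\<forall>i\<le>j. root_vector C' ! i = root_vector C ! i)"
  using assms
proof (induction "nat (root_vector C ! q - Min (set (root_vector C)))" arbitrary: C
    rule: less_induct)
  case less
  let ?x = "root_vector C"
  show ?case
  proof (cases "\<exists>p. j < p \<and> p < q \<and> ?x ! p < ?x ! q")
    case False
    then have "settled j q ?x" using settled_if_no_smaller[OF less.prems(4)] by (meson not_less)
    then show ?thesis using less.prems(1) by blast
  next
    case True
    then obtain p where p: "j < p" "p < q" "?x ! p < ?x ! q"
      and "\<forall>p'<p. \<not> (j < p' \<and> p' < q \<and> ?x ! p' < ?x ! q)"
      unfolding exists_least_iff[of "\<lambda>p. j < p \<and> p < q \<and> ?x ! p < ?x ! q"] by blast
    then have first: "\<forall>p'. j < p' \<and> p' < p \<longrightarrow> ?x ! q \<le> ?x ! p'"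
      by (meson less_trans not_less)
    obtain C' where C': "G_edge B C C'" "root_vector C' = ?x[p := ?x ! q, q := ?x ! p]"
      using G_edge_swapping_first_smaller[OF less.prems(1,4,3) p first] by blast
    have len: "length C' = length C" using arg_cong[OF C'(2), of length] by simp
    have "G_vertex B C'" using C'(1) by (simp add: G_edge_def)
    moreover have "settled j (Suc q) (root_vector C')"
      using settled_swap[OF less.prems(4), of p q] p less.prems(3) C'(2) by simp
    moreover have "nat (root_vector C' ! q - Min (set (root_vector C'))) < nat (?x ! q - Min (set ?x))"
    proof -
      have "set (root_vector C') = set ?x" "root_vector C' ! q = ?x ! p"
        using C'(2) p less.prems(3) by (simp_all add: nth_list_update)
      moreover have "Min (set ?x) \<le> ?x ! p" using p less.prems(3) by simp
      ultimately show ?thesis using p(3) by simp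
    qed
    ultimately obtain C'' where C'': "(G_edge B)\<^sup>*\<^sup>* C' C''" "G_vertex B C''"
      "length C'' = length C" "settled j q (root_vector C'')"
      "\<forall>i\<le>j. root_vector C'' ! i = root_vector C' ! i"
      using less.hyps[of C'] less.prems(2,3) len by auto
    have "(G_edge B)\<^sup>*\<^sup>* C C''" using C'(1) C''(1) by (rule converse_rtranclp_into_rtranclp)
    moreover have "\<forall>i\<le>j. root_vector C'' ! i = root_vector C ! i"
      using C''(5) C'(2) p by (simp add: nth_list_update)
    ultimately show ?thesis using C'' by blast
  qed
qed

lemma exists_G_path_settling_tail:
  assumes "G_vertex B C" "j < m" "m \<le> length C" "settled j m (root_vector C)"
  shows "\<exists>C'. (G_edge B)\<^sup>*\<^sup>* C C' \<and> G_vertex B C' \<and> length C' = length C \<and>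
    settled j (Suc j) (root_vector C') \<and> (\<forall>i\<le>j. root_vector C' ! i = root_vector C ! i)"
  using assms
proof (induction m arbitrary: C)
  case 0
  then show ?case by simp
next
  case (Suc q)
  show ?case
  proof (cases "q = j")
    case True
    then show ?thesis using Suc.prems(1,4) by blast
  next
    case False
    have q: "j < q" "q < length C" using Suc.prems(2,3) False by auto
    then obtain C' where C': "(G_edge B)\<^sup>*\<^sup>* C C'" "G_vertex B C'" "length C' = length C"
      "settled j q (root_vector C')" "\<forall>i\<le>j. root_vector C' ! i = root_vector C ! i"
      using exists_G_path_settling_position[OF Suc.prems(1) q Suc.prems(4)] by blast
    then obtain C'' where C'': "(G_edge B)\<^sup>*\<^sup>* C' C''" "G_vertex B C''" "length C'' = length C'"
      "settled j (Suc j) (root_vector C'')" "\<forall>i\<le>j. root_vector C'' ! i = root_vector C' ! i"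
      using Suc.IH[OF C'(2)] q C'(3) by auto
    then show ?thesis using C' by (intro exI[of _ C'']) (auto intro: rtranclp_trans)
  qed
qed

theorem lemma8:
  fixes B :: "nat list" and n j :: nat
  assumes "ferrers B"
    and "length B = n"
    and "j < n"
    and "\<forall>i<n. root_vector B ! i \<le> root_vector B ! j"
    and "\<forall>i<j. root_vector B ! i < root_vector B ! j"
  shows "\<exists>B'. ferrers B' \<and> length B' = n \<and> G_vertex B B' \<and> (G_edge B)\<^sup>*\<^sup>* B B' \<and>
           (\<forall>i\<le>j. root_vector B' ! i = root_vector B ! i) \<and>
           (\<forall>i k. j \<le> i \<longrightarrow> i \<le> k \<longrightarrow> k < n \<longrightarrow> root_vector B' ! k \<le> root_vector B' ! i)"
proof -
  have "G_vertex B B" using assms(1) by (simp add: G_vertex_def rook_equiv_def)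
  moreover have "settled j n (root_vector B)"
    using assms(2,4) unfolding settled_def by simp
  ultimately obtain B' where B': "(G_edge B)\<^sup>*\<^sup>* B B'" "G_vertex B B'" "length B' = n"
    "settled j (Suc j) (root_vector B')" "\<forall>i\<le>j. root_vector B' ! i = root_vector B ! i"
    using exists_G_path_settling_tail[of B B j n] assms(2,3) by auto
  have "root_vector B' ! k \<le> root_vector B' ! i" if "j \<le> i" "i \<le> k" "k < n" for i k
  proof -
    have "i = j \<or> Suc j \<le> k" using that by auto
    then show ?thesis using settledD[OF B'(4)] B'(3) that by simp
  qed
  then show ?thesis using B' by (auto simp: G_vertex_def)
qed

end
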